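(* Let $d$ be a positive integer. (1) If $D=T^{2d}+T^{e}$ with $0\le e<d$, then the partial quotients $a_h$ ($h\ge0$) of the continued fraction expansion of $\sqrt D$ satisfy $\deg a_h=d$ for $h$ even and $\deg a_h=d-e$ for $h$ odd. (2) If $D=T^{2d}+T^{d}$, then all partial quotients $a_h$ ($h\ge0$) of the continued fraction expansion of $\sqrt D$ have degree $d$. Moreover, in both cases $l(\sqrt D)=d$.
   Context: $\mathbb{Q}((1/T))$ is the field of formal Laurent series $\sum_{i=-\infty}^m c_iT^i$, $c_i\in\mathbb{Q}$; $\deg$ of a nonzero series is the exponent of its leading term, $\deg 0=-\infty$. $\sqrt D\in\mathbb{Q}((1/T))$ denotes the square root $T^d(1+\dots)$ of $D$. The continued fraction expansion $[a_0,a_1,\dots]$ of $\alpha$ is given by $\alpha_0=\alpha$, $a_i=\lfloor\alpha_i\rfloor$ (the sum of the terms of nonnegative degree), $\alpha_{i+1}=(\alpha_i-a_i)^{-1}$. For $\alpha\notin\mathbb{Q}(T)$, the Lagrange constant $l(\alpha)\in\mathbb{Z}\cup\{\infty\}$ is the supremum of integers $k$ such that $\deg(\alpha-p/q)\le-2\deg q-k$ for infinitely many $p,q\in\mathbb{Q}[T]$, $q\ne0$. *)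

theory Defs
  imports "HOL-Computational_Algebra.Computational_Algebra" "HOL-Library.Extended_Real"
begin

text \<open>Q((1/T)) is modelled as rat fls (Laurent series in X with finitely many
negative powers) via T = X^(-1), i.e. T = fls_X_inv.  Then the degree (in T)
of a nonzero series x is minus its subdegree in X.\<close>

abbreviation T :: "rat fls" where "T \<equiv> fls_X_inv"

text \<open>degree in T of a nonzero series (only used on nonzero arguments).\<close>
definition fdeg :: "rat fls \<Rightarrow> int" where
  "fdeg x = - fls_subdegree x"

definition tpoly :: "rat poly \<Rightarrow> rat fls" where
  "tpoly p = (\<Sum>i\<le>degree p. fls_const (coeff p i) * T ^ i)"

text \<open>Polynomial part: sum of the terms of nonnegative degree in T, as a polynomial in T.\<close>
definition fls_floor :: "rat fls \<Rightarrow> rat poly" where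
  "fls_floor x = Poly (map (\<lambda>i. fls_nth x (- int i)) [0..<Suc (nat (fdeg x))])"

definition fls_sqrt :: "rat fls \<Rightarrow> rat fls" where
  "fls_sqrt D = (THE s. s * s = D \<and> fls_nth s (fls_subdegree s) = 1)"

primrec cf_rem :: "rat fls \<Rightarrow> nat \<Rightarrow> rat fls" where
  "cf_rem \<alpha> 0 = \<alpha>"
| "cf_rem \<alpha> (Suc i) = inverse (cf_rem \<alpha> i - tpoly (fls_floor (cf_rem \<alpha> i)))"

definition cf_pq :: "rat fls \<Rightarrow> nat \<Rightarrow> rat poly" where
  "cf_pq \<alpha> i = fls_floor (cf_rem \<alpha> i)"

text \<open>Lagrange constant: supremum of integers k such that infinitely many distinct
rational functions p/q satisfy deg(alpha - p/q) <= -2 deg q - k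
(deg 0 = -infinity, so alpha - p/q = 0 counts as satisfying it).\<close>
definition lagrange_const :: "rat fls \<Rightarrow> ereal" where
  "lagrange_const \<alpha> = Sup {ereal (of_int k) | k.
     infinite {tpoly p / tpoly q | p q. q \<noteq> 0 \<and>
       (\<alpha> - tpoly p / tpoly q = 0 \<or>
        fdeg (\<alpha> - tpoly p / tpoly q) \<le> - 2 * int (degree q) - k)}}"

end

theory Submission
  imports Defs
begin

text \<open>Let \<alpha> be the square root of D = P^2 + N, where P is monic, deg N < deg P and
N divides 2P, say 2P = NQ. Then \<alpha> - P = N / (\<alpha> + P) has negative degree, which makes the
expansion purely periodic after the first term: \<alpha> = [P; Q, 2P, Q, 2P, ...].
Moreover (\<alpha> + P)^2 / N = PQ + 1 + Q\<alpha> is a unit of Q[T][\<alpha>] whose conjugate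
(\<alpha> - P)^2 / N is small; its powers give infinitely many p/q with
deg(\<alpha> - p/q) = -2 deg q - deg P, while the Liouville argument (q^2D - p^2 is a nonzero
polynomial) excludes better approximations, so l(\<alpha>) = deg P.
The theorem is the case P = T^d, N = T^e and the case P = T^d + 1/2, N = -1/4.\<close>

unbundle fps_syntax

section \<open>Polynomials in T as Laurent series\<close>

lemma tpoly_nth: "tpoly p $$ n = (if n \<le> 0 then coeff p (nat (-n)) else 0)"
proof -
  have "tpoly p $$ n = (\<Sum>i\<le>degree p. (fls_const (coeff p i) * T ^ i) $$ n)"
    unfolding tpoly_def by (rule fls_nth_sum)
  also have "\<dots> = (\<Sum>i\<le>degree p. if n = - int i then coeff p i else 0)"
    by (intro sum.cong refl) simp
  also have "\<dots> = (if n \<le> 0 then coeff p (nat (-n)) else 0)"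
  proof (cases "n \<le> 0")
    case True
    then have "\<And>i. n = - int i \<longleftrightarrow> i = nat (-n)" by auto
    with True show ?thesis by (simp add: sum.delta coeff_eq_0 not_le)
  qed auto
  finally show ?thesis .
qed

lemma tpoly_0 [simp]: "tpoly 0 = 0"
  by (rule fls_eqI) (simp add: tpoly_nth)

lemma tpoly_add: "tpoly (p + q) = tpoly p + tpoly q"
  by (rule fls_eqI) (simp add: tpoly_nth)

lemma tpoly_diff: "tpoly (p - q) = tpoly p - tpoly q"
  by (rule fls_eqI) (simp add: tpoly_nth)

lemma tpoly_smult: "tpoly (smult c p) = fls_const c * tpoly p"
  by (rule fls_eqI) (simp add: tpoly_nth)

lemma tpoly_const: "tpoly [:c:] = fls_const c"
  by (rule fls_eqI) (auto simp: tpoly_nth coeff_pCons split: nat.splits)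

lemma tpoly_1 [simp]: "tpoly 1 = 1"
  using tpoly_const[of 1] by (simp add: one_pCons)

lemma tpoly_monom: "tpoly (monom c n) = fls_const c * T ^ n"
  by (rule fls_eqI) (auto simp: tpoly_nth coeff_monom)

lemma tpoly_pCons: "tpoly (pCons a p) = fls_const a + T * tpoly p"
proof (rule fls_eqI)
  fix n
  have shift: "(T * tpoly p) $$ n = tpoly p $$ (n + 1)"
    using fls_X_inv_times_conv_shift(1)[of "tpoly p"] by simp
  show "tpoly (pCons a p) $$ n = (fls_const a + T * tpoly p) $$ n"
  proof (cases "n < 0")
    case True
    then have "nat (-n) = Suc (nat (- (n + 1)))" by simp
    with True shift show ?thesis by (simp add: tpoly_nth coeff_pCons)
  next
    case False
    with shift show ?thesis by (cases "n = 0") (simp_all add: tpoly_nth)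
  qed
qed

lemma tpoly_mult: "tpoly (p * q) = tpoly p * tpoly q"
proof (induction p)
  case (pCons a p)
  have "tpoly (pCons a p * q) = fls_const a * tpoly q + T * (tpoly p * tpoly q)"
    by (simp add: tpoly_add tpoly_smult tpoly_pCons pCons.IH)
  also have "\<dots> = tpoly (pCons a p) * tpoly q"
    by (simp add: tpoly_pCons algebra_simps)
  finally show ?case .
qed simp

lemma tpoly_subdegree: "p \<noteq> 0 \<Longrightarrow> fls_subdegree (tpoly p) = - int (degree p)"
  by (rule fls_subdegree_eqI) (auto simp: tpoly_nth coeff_eq_0)

lemma tpoly_subdegree_nonpos: "fls_subdegree (tpoly p) \<le> 0"
  by (cases "p = 0") (simp_all add: tpoly_subdegree)

lemma tpoly_eq_0_iff [simp]: "tpoly p = 0 \<longleftrightarrow> p = 0"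
proof
  assume "tpoly p = 0"
  then have "coeff p i = 0" for i
    using tpoly_nth[of p "- int i"] by simp
  then show "p = 0" by (simp add: poly_eqI)
qed simp

lemma coeff_fls_floor: "coeff (fls_floor x) i = x $$ (- int i)"
proof (cases "i < Suc (nat (fdeg x))")
  case True
  then show ?thesis by (simp add: fls_floor_def nth_default_def del: upt_Suc)
next
  case False
  then have "- int i < fls_subdegree x" unfolding fdeg_def by auto
  with False show ?thesis by (simp add: fls_floor_def nth_default_def)
qed

lemma fls_floor_unique:
  assumes "0 < fls_subdegree (x - tpoly P)"
  shows "fls_floor x = P"
proof (rule poly_eqI)
  fix i
  have "(x - tpoly P) $$ (- int i) = 0"
    using assms by (intro fls_eq0_below_subdegree) simp
  then show "coeff (fls_floor x) i = coeff P i"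
    by (simp add: coeff_fls_floor tpoly_nth[of P "- int i"])
qed

section \<open>Square roots\<close>

lemma fls_sqrt_eqI:
  assumes "s * s = D" "s $$ fls_subdegree s = 1"
  shows "fls_sqrt D = s"
  unfolding fls_sqrt_def
proof (rule the_equality)
  fix t assume t: "t * t = D \<and> t $$ fls_subdegree t = 1"
  have "(t - s) * (t + s) = 0" using t assms by (simp add: algebra_simps)
  then have "t = s \<or> t = - s" by (auto simp: eq_neg_iff_add_eq_0)
  moreover have "t \<noteq> - s" using t assms by auto
  ultimately show "t = s" by blast
qed (use assms in simp)

lemma fls_sqrt_monic:
  assumes "fls_subdegree D = 2 * k" "D $$ fls_subdegree D = 1"
  shows "fls_sqrt D * fls_sqrt D = D" "fls_subdegree (fls_sqrt D) = k" "fls_sqrt D $$ k = 1"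
proof -
  define f where "f = fls_base_factor_to_fps D"
  have f0: "f $ 0 = 1" using assms(2) by (simp add: f_def fls_base_factor_to_fps_nth)
  define r where "r = fps_radical (\<lambda>_ _. 1) 2 f"
  have "r ^ 2 = f"
    using power_radical[of f "\<lambda>_ _. 1" 1] f0 by (simp add: r_def numeral_2_eq_2)
  then have rr: "r * r = f" by (simp add: power2_eq_square)
  have r0: "r $ 0 = 1" by (simp add: r_def f0)
  define s where "s = fls_shift (- k) (fps_to_fls r)"
  have "s * s = fls_shift (- 2 * k) (fps_to_fls f)"
    by (simp add: s_def fls_times_both_shifted_simp flip: rr fls_times_fps_to_fls)
  also have "\<dots> = D"
    using fls_conv_base_factor_to_fps_shift_subdegree[of D] assms(1) by (simp add: f_def)
  finally have ss: "s * s = D" .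
  have "fps_to_fls r \<noteq> 0" "fls_subdegree (fps_to_fls r) = 0"
    using r0 by (auto simp: fls_subdegree_fls_to_fps subdegree_eq_0 dest: arg_cong[of _ _ "\<lambda>f. f $$ 0"])
  then have sk: "fls_subdegree s = k" by (simp add: s_def)
  have s1: "s $$ k = 1" using r0 by (simp add: s_def)
  have "fls_sqrt D = s" using ss sk s1 by (intro fls_sqrt_eqI) simp_all
  with ss sk s1 show "fls_sqrt D * fls_sqrt D = D" "fls_subdegree (fls_sqrt D) = k" "fls_sqrt D $$ k = 1"
    by simp_all
qed

lemma sqrt_square_plus_lower_degree:
  fixes P N :: "rat poly"
  assumes "lead_coeff P = 1" "degree N < degree P" "N \<noteq> 0"
  defines "s \<equiv> fls_sqrt (tpoly (P * P + N))"
  shows "(s - tpoly P) * (s + tpoly P) = tpoly N"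
    and "fls_subdegree s = - int (degree P)"
    and "fls_subdegree (s - tpoly P) = int (degree P) - int (degree N)"
proof -
  have "P \<noteq> 0" using assms(1) by auto
  then have deg_PP: "degree (P * P) = 2 * degree P" by (simp add: degree_mult_eq)
  have deg_D: "degree (P * P + N) = 2 * degree P"
    using assms(2) deg_PP by (simp add: degree_add_eq_left)
  have "lead_coeff (P * P + N) = lead_coeff (P * P)"
    using lead_coeff_add_le[of N "P * P"] assms(2) deg_PP by (simp add: add.commute)
  then have lead_D: "lead_coeff (P * P + N) = 1"
    using assms(1) by (simp add: lead_coeff_mult)
  then have "P * P + N \<noteq> 0" by (metis leading_coeff_0_iff zero_neq_one)
  then have sub_D: "fls_subdegree (tpoly (P * P + N)) = 2 * (- int (degree P))"
    using deg_D by (simp add: tpoly_subdegree)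
  moreover have "tpoly (P * P + N) $$ fls_subdegree (tpoly (P * P + N)) = 1"
    using sub_D deg_D lead_D by (simp add: tpoly_nth nat_mult_distrib)
  ultimately have ss: "s * s = tpoly (P * P + N)" and sub_s: "fls_subdegree s = - int (degree P)"
    and lead_s: "s $$ (- int (degree P)) = 1"
    unfolding s_def by (rule fls_sqrt_monic)+
  show norm: "(s - tpoly P) * (s + tpoly P) = tpoly N"
    using ss by (simp add: algebra_simps tpoly_add tpoly_mult)
  show "fls_subdegree s = - int (degree P)" by (fact sub_s)
  have "fls_subdegree (s + tpoly P) = - int (degree P)"
  proof (rule fls_subdegree_eqI)
    show "(s + tpoly P) $$ (- int (degree P)) \<noteq> 0"
      using lead_s assms(1) by (simp add: tpoly_nth)
  next
    fix k assume "k < - int (degree P)"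
    then show "(s + tpoly P) $$ k = 0"
      using sub_s by (simp add: tpoly_nth coeff_eq_0)
  qed
  moreover have "s - tpoly P \<noteq> 0" "s + tpoly P \<noteq> 0"
    using norm assms(3) by auto
  ultimately show "fls_subdegree (s - tpoly P) = int (degree P) - int (degree N)"
    using arg_cong[OF norm, of fls_subdegree] assms(3) by (simp add: tpoly_subdegree)
qed

section \<open>Continued fraction expansion\<close>

lemma cf_rem_add: "cf_rem \<alpha> (m + n) = cf_rem (cf_rem \<alpha> m) n"
  by (induction n) simp_all

lemma cf_rem_periodic:
  assumes "cf_rem \<alpha> (n + p) = cf_rem \<alpha> n"
  shows "cf_rem \<alpha> (n + k * p + j) = cf_rem \<alpha> (n + j)"
proof (induction k)
  case (Suc k)
  have "cf_rem \<alpha> (n + Suc k * p + j) = cf_rem (cf_rem \<alpha> (n + p)) (k * p + j)"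
    by (simp add: algebra_simps flip: cf_rem_add)
  also have "\<dots> = cf_rem \<alpha> (n + k * p + j)"
    by (simp add: assms add.assoc flip: cf_rem_add)
  finally show ?case using Suc.IH by simp
qed simp

lemma cf_rem_period_two:
  assumes "cf_rem \<alpha> 3 = cf_rem \<alpha> 1"
  shows "cf_rem \<alpha> (Suc n) = (if even n then cf_rem \<alpha> 1 else cf_rem \<alpha> 2)"
proof -
  have "(1::nat) + 2 = 3" by simp
  with assms have "cf_rem \<alpha> (1 + 2) = cf_rem \<alpha> 1" by (simp only:)
  moreover have "1 + n div 2 * 2 + n mod 2 = Suc n" by simp
  ultimately have periodic: "cf_rem \<alpha> (Suc n) = cf_rem \<alpha> (1 + n mod 2)"
    using cf_rem_periodic[of \<alpha> 1 2 "n div 2" "n mod 2"] by (simp only:)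
  show ?thesis
  proof (cases "even n")
    case True
    then have "n mod 2 = 0" by presburger
    with True periodic show ?thesis by (simp del: cf_rem.simps)
  next
    case False
    then have "n mod 2 = 1" by presburger
    with False periodic show ?thesis by (simp add: numeral_2_eq_2 del: cf_rem.simps)
  qed
qed

lemma cf_pq_period_two:
  assumes norm: "(s - tpoly P) * (s + tpoly P) = tpoly N"
    and small: "0 < fls_subdegree (s - tpoly P)"
    and "N \<noteq> 0" and dvd: "smult 2 P = N * Q"
  shows "cf_pq s h = (if h = 0 then P else if odd h then Q else smult 2 P)"
proof -
  define sm sp where "sm = s - tpoly P" and "sp = s + tpoly P"
  have "sm \<noteq> 0" using small by (auto simp: sm_def)
  have "tpoly N \<noteq> 0" using \<open>N \<noteq> 0\<close> by simp
  have NQ: "tpoly N * tpoly Q = 2 * tpoly P"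
    by (simp add: tpoly_smult flip: tpoly_mult dvd)
  have floor0: "fls_floor s = P"
    using small by (rule fls_floor_unique)
  have rem_sp: "sp - tpoly (smult 2 P) = sm"
    by (simp add: sm_def sp_def tpoly_smult)
  then have floor2: "fls_floor sp = smult 2 P"
    using small by (intro fls_floor_unique) (simp add: sm_def)
  have smsp: "sm * sp = tpoly N" using norm by (simp add: sm_def sp_def)
  then have inv_sm: "inverse sm = sp / tpoly N"
    using \<open>sm \<noteq> 0\<close> \<open>tpoly N \<noteq> 0\<close>
    by (simp add: divide_simps) (simp add: mult.commute)
  have "inverse sm - tpoly Q = (sp - tpoly N * tpoly Q) / tpoly N"
    using \<open>tpoly N \<noteq> 0\<close> by (simp add: inv_sm diff_divide_distrib)
  then have rem_inv_sm: "inverse sm - tpoly Q = sm / tpoly N"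
    by (simp add: NQ sm_def sp_def)
  moreover have "0 < fls_subdegree (sm / tpoly N)"
    using small \<open>sm \<noteq> 0\<close> \<open>N \<noteq> 0\<close>
    by (simp add: fls_divide_subdegree tpoly_subdegree sm_def)
  ultimately have floor1: "fls_floor (inverse sm) = Q"
    by (intro fls_floor_unique) simp
  have "inverse (sm / tpoly N) = sp"
    using \<open>sm \<noteq> 0\<close> by (simp flip: smsp)
  have rem1: "cf_rem s 1 = inverse sm"
    by (simp add: floor0 sm_def)
  then have rem2: "cf_rem s 2 = sp"
    using rem_inv_sm \<open>inverse (sm / tpoly N) = sp\<close> by (simp add: numeral_2_eq_2 floor1)
  have "cf_rem s 3 = inverse (cf_rem s 2 - tpoly (fls_floor (cf_rem s 2)))"
    by (metis cf_rem.simps(2) numeral_2_eq_2 numeral_3_eq_3)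
  also have "\<dots> = cf_rem s 1"
    using rem1 rem2 rem_sp by (simp add: floor2)
  finally have "cf_pq s (Suc n) = (if even n then Q else smult 2 P)" for n
    using cf_rem_period_two[of s n] rem1 rem2 by (simp add: cf_pq_def floor1 floor2 del: cf_rem.simps)
  then show ?thesis
    by (cases h) (simp_all add: floor0 cf_pq_def[of s 0])
qed

section \<open>Lagrange constant of a quadratic series\<close>

lemma quadratic_liouville:
  fixes s :: "rat fls"
  assumes ss: "s * s = tpoly D" and "s \<noteq> 0" and "q \<noteq> 0" and "s \<noteq> tpoly p / tpoly q"
  shows "fls_subdegree (s - tpoly p / tpoly q) \<le> 2 * int (degree q) - fls_subdegree s"
proof (rule ccontr)
  define x where "x = s - tpoly p / tpoly q"
  assume "\<not> ?thesis"
  then have x_big: "2 * int (degree q) - fls_subdegree s < fls_subdegree x" by (simp add: x_def)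
  have "x \<noteq> 0" using assms(4) by (simp add: x_def)
  have "tpoly q \<noteq> 0" and sub_q: "fls_subdegree (tpoly q) = - int (degree q)"
    using \<open>q \<noteq> 0\<close> by (simp_all add: tpoly_subdegree)
  have "2 * fls_subdegree s \<le> 0"
    using arg_cong[OF ss, of fls_subdegree] tpoly_subdegree_nonpos[of D] \<open>s \<noteq> 0\<close> by simp
  define y1 y2 where "y1 = tpoly q * x" and "y2 = tpoly q * s + tpoly p"
  have "y1 \<noteq> 0" and sub_y1: "int (degree q) - fls_subdegree s < fls_subdegree y1"
    using \<open>x \<noteq> 0\<close> \<open>tpoly q \<noteq> 0\<close> sub_q x_big by (simp_all add: y1_def)
  have y2_eq: "y2 = 2 * tpoly q * s - y1"
    using \<open>tpoly q \<noteq> 0\<close> by (simp add: y1_def y2_def x_def algebra_simps)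
  have "2 * tpoly q * s \<noteq> 0" "fls_subdegree (2 * tpoly q * s) = fls_subdegree s - int (degree q)"
    using \<open>tpoly q \<noteq> 0\<close> \<open>s \<noteq> 0\<close> sub_q by simp_all
  then have "fls_subdegree y2 = fls_subdegree s - int (degree q)" "y2 \<noteq> 0"
    using fls_subdegree_diff_eq1[of "2 * tpoly q * s" y1] sub_y1 \<open>2 * fls_subdegree s \<le> 0\<close>
    by (auto simp: y2_eq)
  then have "0 < fls_subdegree (y1 * y2)"
    using sub_y1 \<open>y1 \<noteq> 0\<close> by simp
  moreover have "y1 * y2 = tpoly (q * q * D - p * p)"
    using \<open>tpoly q \<noteq> 0\<close>
    by (simp add: y1_def y2_def x_def algebra_simps tpoly_diff tpoly_mult flip: ss)
  ultimately show False
    using tpoly_subdegree_nonpos by (metis not_le)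
qed

lemma quadratic_power_conj:
  assumes ss: "s * s = tpoly D"
  shows "\<exists>a' b'. (tpoly a + tpoly b * s) ^ n = tpoly a' + tpoly b' * s
                \<and> (tpoly a - tpoly b * s) ^ n = tpoly a' - tpoly b' * s"
proof (induction n)
  case 0
  show ?case by (rule exI[of _ 1], rule exI[of _ 0]) simp
next
  case (Suc n)
  then obtain a' b' where IH: "(tpoly a + tpoly b * s) ^ n = tpoly a' + tpoly b' * s"
    "(tpoly a - tpoly b * s) ^ n = tpoly a' - tpoly b' * s" by blast
  show ?case
  proof (intro exI conjI)
    have "(tpoly a + tpoly b * s) ^ Suc n = (tpoly a + tpoly b * s) * (tpoly a' + tpoly b' * s)"
      by (simp add: IH)
    also have "\<dots> = tpoly (a * a' + D * b * b') + tpoly (a * b' + b * a') * s"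
      by (simp add: tpoly_add tpoly_mult algebra_simps flip: ss)
    finally show "(tpoly a + tpoly b * s) ^ Suc n = tpoly (a * a' + D * b * b') + tpoly (a * b' + b * a') * s" .
    have "(tpoly a - tpoly b * s) ^ Suc n = (tpoly a - tpoly b * s) * (tpoly a' - tpoly b' * s)"
      by (simp add: IH)
    also have "\<dots> = tpoly (a * a' + D * b * b') - tpoly (a * b' + b * a') * s"
      by (simp add: tpoly_add tpoly_mult algebra_simps flip: ss)
    finally show "(tpoly a - tpoly b * s) ^ Suc n = tpoly (a * a' + D * b * b') - tpoly (a * b' + b * a') * s" .
  qed
qed

lemma fls_subdegree_unit:
  fixes u w :: "'a::field fls"
  assumes "u * w = 1"
  shows "fls_subdegree u = - fls_subdegree w"
proof -
  have "u \<noteq> 0" "w \<noteq> 0" using assms by auto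
  then show ?thesis using arg_cong[OF assms, of fls_subdegree] by simp
qed

lemma unit_power_approximation:
  fixes s :: "rat fls"
  assumes ss: "s * s = tpoly D" and "s \<noteq> 0"
    and unit: "(tpoly a + tpoly b * s) * (tpoly a - tpoly b * s) = 1"
    and small: "0 < fls_subdegree (tpoly a - tpoly b * s)" and "0 < n"
  shows "\<exists>p q. q \<noteq> 0 \<and> s \<noteq> tpoly p / tpoly q
    \<and> fls_subdegree (s - tpoly p / tpoly q) = 2 * int (degree q) - fls_subdegree s
    \<and> fls_subdegree (s - tpoly p / tpoly q) = 2 * int n * fls_subdegree (tpoly a - tpoly b * s) + fls_subdegree s"
proof -
  define u w m where "u = tpoly a + tpoly b * s" and "w = tpoly a - tpoly b * s"
    and "m = fls_subdegree (tpoly a - tpoly b * s)"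
  obtain p q where u_n: "u ^ n = tpoly p + tpoly q * s" and w_n: "w ^ n = tpoly p - tpoly q * s"
    using quadratic_power_conj[OF ss, of a b n] by (auto simp: u_def w_def)
  have "u ^ n * w ^ n = 1" using unit by (simp add: u_def w_def flip: power_mult_distrib)
  then have "u ^ n \<noteq> 0" "w ^ n \<noteq> 0" by (metis mult_zero_left mult_zero_right zero_neq_one)+
  have sub_w: "fls_subdegree (w ^ n) = int n * m"
    by (simp add: fls_subdegree_pow w_def m_def)
  then have sub_u: "fls_subdegree (u ^ n) = - (int n * m)"
    using fls_subdegree_unit[OF \<open>u ^ n * w ^ n = 1\<close>] by simp
  have two_q: "2 * tpoly q * s = u ^ n - w ^ n" by (simp add: u_n w_n)
  have "u ^ n - w ^ n \<noteq> 0"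
    using sub_u sub_w small \<open>0 < n\<close> by (auto simp: m_def)
  then have "q \<noteq> 0" using two_q by auto
  have "fls_subdegree (u ^ n - w ^ n) = - (int n * m)"
    using fls_subdegree_diff_eq1[OF \<open>u ^ n \<noteq> 0\<close>] sub_u sub_w small \<open>0 < n\<close>
    by (simp add: m_def)
  moreover have "fls_subdegree (2 * tpoly q * s) = fls_subdegree s - int (degree q)"
    using \<open>q \<noteq> 0\<close> \<open>s \<noteq> 0\<close> by (simp add: tpoly_subdegree)
  ultimately have deg_q: "int (degree q) = int n * m + fls_subdegree s"
    by (simp add: two_q)
  have diff: "s - tpoly p / tpoly q = - (w ^ n) / tpoly q"
    using \<open>q \<noteq> 0\<close> by (simp add: w_n field_simps)
  with \<open>w ^ n \<noteq> 0\<close> \<open>q \<noteq> 0\<close> have "s \<noteq> tpoly p / tpoly q" by auto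
  moreover have "fls_subdegree (s - tpoly p / tpoly q) = int n * m + int (degree q)"
    using \<open>q \<noteq> 0\<close> \<open>w ^ n \<noteq> 0\<close> sub_w
    by (simp add: diff fls_divide_subdegree tpoly_subdegree)
  ultimately have "q \<noteq> 0 \<and> s \<noteq> tpoly p / tpoly q
    \<and> fls_subdegree (s - tpoly p / tpoly q) = 2 * int (degree q) - fls_subdegree s
    \<and> fls_subdegree (s - tpoly p / tpoly q) = 2 * int n * m + fls_subdegree s"
    using \<open>q \<noteq> 0\<close> deg_q by simp
  then show ?thesis by (auto simp: m_def)
qed

definition approx_set :: "rat fls \<Rightarrow> int \<Rightarrow> rat fls set" where
  "approx_set \<alpha> k = {tpoly p / tpoly q | p q. q \<noteq> 0 \<and>
     (\<alpha> - tpoly p / tpoly q = 0 \<or> fdeg (\<alpha> - tpoly p / tpoly q) \<le> - 2 * int (degree q) - k)}"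

lemma lagrange_const_eqI:
  assumes "infinite (approx_set \<alpha> c)" and "\<And>k. c < k \<Longrightarrow> finite (approx_set \<alpha> k)"
  shows "lagrange_const \<alpha> = ereal (of_int c)"
  unfolding lagrange_const_def approx_set_def[symmetric]
proof (rule Sup_eqI)
  fix y assume "y \<in> {ereal (of_int k) |k. infinite (approx_set \<alpha> k)}"
  then obtain k where "y = ereal (of_int k)" "infinite (approx_set \<alpha> k)" by blast
  with assms(2) show "y \<le> ereal (of_int c)" by (cases "c < k") auto
next
  fix y assume "\<And>z. z \<in> {ereal (of_int k) |k. infinite (approx_set \<alpha> k)} \<Longrightarrow> z \<le> y"
  with assms(1) show "ereal (of_int c) \<le> y" by blast
qed

lemma infinite_if_arbitrarily_close:
  fixes A :: "'a::group_add fls set"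
  assumes "\<And>N. \<exists>v\<in>A. N \<le> fls_subdegree (\<alpha> - v)"
  shows "infinite A"
proof
  assume "finite A"
  define M where "M = Max ((\<lambda>v. fls_subdegree (\<alpha> - v)) ` A)"
  obtain v where "v \<in> A" "M + 1 \<le> fls_subdegree (\<alpha> - v)" using assms by blast
  moreover have "fls_subdegree (\<alpha> - v) \<le> M"
    using \<open>finite A\<close> \<open>v \<in> A\<close> by (simp add: M_def)
  ultimately show False by simp
qed

lemma lagrange_const_quadratic:
  fixes s :: "rat fls"
  assumes ss: "s * s = tpoly D" and "s \<noteq> 0"
    and unit: "(tpoly a + tpoly b * s) * (tpoly a - tpoly b * s) = 1"
    and small: "0 < fls_subdegree (tpoly a - tpoly b * s)"
  shows "lagrange_const s = ereal (of_int (- fls_subdegree s))"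
proof (rule lagrange_const_eqI)
  show "infinite (approx_set s (- fls_subdegree s))"
  proof (rule infinite_if_arbitrarily_close)
    fix N :: int
    define n where "n = nat (N - fls_subdegree s) + 1"
    obtain p q where "q \<noteq> 0" "s \<noteq> tpoly p / tpoly q"
      and quality: "fls_subdegree (s - tpoly p / tpoly q) = 2 * int (degree q) - fls_subdegree s"
      and close: "fls_subdegree (s - tpoly p / tpoly q)
                    = 2 * int n * fls_subdegree (tpoly a - tpoly b * s) + fls_subdegree s"
      using unit_power_approximation[OF ss \<open>s \<noteq> 0\<close> unit small, of n] by (auto simp: n_def)
    have "0 \<le> int n * (2 * fls_subdegree (tpoly a - tpoly b * s) - 1)"
      using small by simp
    moreover have "N - fls_subdegree s \<le> int n" by (simp add: n_def)
    ultimately have "N \<le> fls_subdegree (s - tpoly p / tpoly q)"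
      unfolding close by (simp add: algebra_simps)
    moreover have "tpoly p / tpoly q \<in> approx_set s (- fls_subdegree s)"
      unfolding approx_set_def fdeg_def using \<open>q \<noteq> 0\<close> quality by force
    ultimately show "\<exists>v\<in>approx_set s (- fls_subdegree s). N \<le> fls_subdegree (s - v)" by blast
  qed
next
  fix k assume k: "- fls_subdegree s < k"
  have "approx_set s k \<subseteq> {s}"
  proof
    fix v assume "v \<in> approx_set s k"
    then obtain p q where v: "v = tpoly p / tpoly q" and "q \<noteq> 0"
      and approx: "s - v = 0 \<or> fdeg (s - v) \<le> - 2 * int (degree q) - k"
      unfolding approx_set_def by blast
    show "v \<in> {s}"
    proof (rule ccontr)
      assume "v \<notin> {s}"
      then have "2 * int (degree q) + k \<le> fls_subdegree (s - v)"
        using approx by (simp add: fdeg_def)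
      moreover have "fls_subdegree (s - v) \<le> 2 * int (degree q) - fls_subdegree s"
        using quadratic_liouville[OF ss \<open>s \<noteq> 0\<close> \<open>q \<noteq> 0\<close>] \<open>v \<notin> {s}\<close> v by simp
      ultimately show False using k by simp
    qed
  qed
  then show "finite (approx_set s k)" by (rule finite_subset) simp
qed

lemma lagrange_const_period_two:
  assumes norm: "(s - tpoly P) * (s + tpoly P) = tpoly N"
    and small: "0 < fls_subdegree (s - tpoly P)"
    and "N \<noteq> 0" and dvd: "smult 2 P = N * Q"
  shows "lagrange_const s = ereal (of_int (- fls_subdegree s))"
proof -
  define sm sp where "sm = s - tpoly P" and "sp = s + tpoly P"
  have "sm \<noteq> 0" using small by (auto simp: sm_def)
  have "tpoly N \<noteq> 0" using \<open>N \<noteq> 0\<close> by simp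
  have NQ: "tpoly N * tpoly Q = 2 * tpoly P"
    by (simp add: tpoly_smult flip: tpoly_mult dvd)
  have "s * s = (s - tpoly P) * (s + tpoly P) + tpoly P * tpoly P"
    by (simp add: algebra_simps)
  then have ss': "s * s = tpoly P * tpoly P + tpoly N"
    by (simp only: norm add.commute)
  then have ss: "s * s = tpoly (P * P + N)"
    by (simp add: tpoly_add tpoly_mult)
  have "s \<noteq> 0"
    using small tpoly_subdegree_nonpos[of P] by auto
  define a b where "a = P * Q + 1" and "b = Q"
  have ta: "tpoly a = tpoly P * tpoly Q + 1" by (simp add: a_def tpoly_add tpoly_mult)
  have w: "tpoly N * (tpoly a - tpoly b * s) = sm * sm"
    unfolding ta b_def sm_def using NQ ss' by algebra
  have u: "tpoly N * (tpoly a + tpoly b * s) = sp * sp"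
    unfolding ta b_def sp_def using NQ ss' by algebra
  have "(tpoly N * tpoly N) * ((tpoly a + tpoly b * s) * (tpoly a - tpoly b * s)) = tpoly N * tpoly N"
    using u w norm unfolding sm_def sp_def by algebra
  then have unit: "(tpoly a + tpoly b * s) * (tpoly a - tpoly b * s) = 1"
    using \<open>tpoly N \<noteq> 0\<close> by simp
  have "tpoly a - tpoly b * s \<noteq> 0"
    using w \<open>sm \<noteq> 0\<close> by auto
  then have "0 < fls_subdegree (tpoly a - tpoly b * s)"
    using arg_cong[OF w, of fls_subdegree] small \<open>N \<noteq> 0\<close> \<open>sm \<noteq> 0\<close>
    by (simp add: tpoly_subdegree sm_def)
  with ss \<open>s \<noteq> 0\<close> unit show ?thesis
    by (rule lagrange_const_quadratic)
qed

section \<open>Square roots of P^2 + N with N dividing 2P\<close>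

lemma sqrt_square_plus_divisor:
  fixes P N Q :: "rat poly"
  assumes "lead_coeff P = 1" "degree N < degree P" "smult 2 P = N * Q"
  defines "\<alpha> \<equiv> fls_sqrt (tpoly (P * P + N))"
  shows "cf_pq \<alpha> h = (if h = 0 then P else if odd h then Q else smult 2 P)"
    and "lagrange_const \<alpha> = ereal (of_nat (degree P))"
proof -
  have "N \<noteq> 0" using assms(1,3) by auto
  note sqrt = sqrt_square_plus_lower_degree[OF assms(1,2) \<open>N \<noteq> 0\<close>, folded \<alpha>_def]
  have small: "0 < fls_subdegree (\<alpha> - tpoly P)" using sqrt(3) assms(2) by simp
  show "cf_pq \<alpha> h = (if h = 0 then P else if odd h then Q else smult 2 P)"
    using sqrt(1) small \<open>N \<noteq> 0\<close> assms(3) by (rule cf_pq_period_two)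
  show "lagrange_const \<alpha> = ereal (of_nat (degree P))"
    using lagrange_const_period_two[OF sqrt(1) small \<open>N \<noteq> 0\<close> assms(3)] sqrt(2) by simp
qed

lemma sqrt_T_power_plus_lower_power:
  assumes "e < d"
  defines "\<alpha> \<equiv> fls_sqrt (T ^ (2 * d) + T ^ e)"
  shows "degree (cf_pq \<alpha> h) = (if even h then d else d - e)"
    and "lagrange_const \<alpha> = ereal (of_nat d)"
proof -
  let ?P = "monom (1::rat) d" and ?N = "monom (1::rat) e" and ?Q = "monom (2::rat) (d - e)"
  have D: "tpoly (?P * ?P + ?N) = T ^ (2 * d) + T ^ e"
    by (simp add: mult_monom tpoly_add tpoly_monom mult_2)
  have "lead_coeff ?P = 1" "degree ?N < degree ?P" "smult 2 ?P = ?N * ?Q"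
    using assms by (simp_all add: degree_monom_eq mult_monom smult_monom)
  note expansion = sqrt_square_plus_divisor[OF this, unfolded D, folded \<alpha>_def]
  show "degree (cf_pq \<alpha> h) = (if even h then d else d - e)"
    by (simp add: expansion(1) degree_monom_eq)
  show "lagrange_const \<alpha> = ereal (of_nat d)"
    by (simp add: expansion(2) degree_monom_eq)
qed

lemma sqrt_T_power_plus_half_power:
  assumes "0 < d"
  defines "\<alpha> \<equiv> fls_sqrt (T ^ (2 * d) + T ^ d)"
  shows "degree (cf_pq \<alpha> h) = d" and "lagrange_const \<alpha> = ereal (of_nat d)"
proof -
  let ?P = "monom (1::rat) d + [:1/2:]" and ?N = "[:- 1/4 :: rat:]" and ?Q = "smult (- 8) (monom 1 d + [:1/2:])"
  have square: "(y + c) * (y + c) + - (c * c) = y * y + y" if "c + c = 1" for y c :: "rat fls"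
    using that by algebra
  have "fls_const (1/2) + fls_const (1/2) = (1 :: rat fls)"
    by (simp add: fls_plus_const flip: fls_const_1)
  from square[OF this, of "T ^ d"] have D: "tpoly (?P * ?P + ?N) = T ^ (2 * d) + T ^ d"
    by (simp add: tpoly_add tpoly_mult tpoly_monom tpoly_const mult_2 power_add flip: fls_const_uminus)
  have deg: "degree ?P = d" and lead: "lead_coeff ?P = 1"
    using assms lead_coeff_add_le[of "[:1/2:]" "monom (1::rat) d"]
    by (simp_all add: degree_add_eq_left degree_monom_eq add.commute)
  have "degree ?N < degree ?P" "smult 2 ?P = ?N * ?Q" using assms deg by simp_all
  note expansion = sqrt_square_plus_divisor[OF lead this, unfolded D, folded \<alpha>_def]
  show "degree (cf_pq \<alpha> h) = d"
    using deg by (simp add: expansion(1))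
  show "lagrange_const \<alpha> = ereal (of_nat d)"
    using deg by (simp add: expansion(2))
qed

theorem theorem3:
  fixes d :: nat
  assumes "d > 0"
  shows "(\<forall>e::nat. e < d \<longrightarrow>
            (let \<alpha> = fls_sqrt (T ^ (2 * d) + T ^ e) in
               (\<forall>h. degree (cf_pq \<alpha> h) = (if even h then d else d - e))
               \<and> lagrange_const \<alpha> = ereal (of_nat d)))
       \<and> (let \<alpha> = fls_sqrt (T ^ (2 * d) + T ^ d) in
               (\<forall>h. degree (cf_pq \<alpha> h) = d)
               \<and> lagrange_const \<alpha> = ereal (of_nat d))"
  using sqrt_T_power_plus_lower_power sqrt_T_power_plus_half_power[OF assms]
  by (simp add: Let_def)

end
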